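(* Let $E$ be a nonempty closed convex subset of a real Hilbert space $H$ and let $S:E\to E$ be a $(\lambda,\gamma)$-generalized hybrid mapping for some $\lambda,\gamma\in\mathbb{R}$ with $F(S)\neq\emptyset$. Let $\{\alpha_n\}$ satisfy $0<\alpha\le\alpha_n\le 1$ for all $n$ (for some constant $\alpha>0$), and let $\{\beta_n\}$ be a sequence in $[b,1]$ for some $b\in(0,1)$ with $\liminf_{n\to\infty}\beta_n(1-\beta_n)>0$. Let $\{x_n\}$ and $\{u_n\}$ be generated by $x_1=x\in E$ and, for all $n\in\mathbb{N}$, $$u_n\in E \text{ such that } \langle y-u_n,u_n-x_n\rangle\ge 0 \quad\text{for all } y\in E,$$ $$y_n=(1-\beta_n)x_n+\beta_n Su_n,\qquad x_{n+1}=(1-\alpha_n)x_n+\alpha_n Sy_n.$$ Then $\{x_n\}$ converges weakly to a point $v\in F(S)$, where $v=\lim_{n\to\infty}P_{F(S)}(x_n)$.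
   Context: $F(S)=\{x\in E: Sx=x\}$. A mapping $S:E\to E$ is $(\lambda,\gamma)$-generalized hybrid if $\lambda\|Sx-Sy\|^2+(1-\lambda)\|x-Sy\|^2\le \gamma\|Sx-y\|^2+(1-\gamma)\|x-y\|^2$ for all $x,y\in E$. For a nonempty closed convex $K\subset H$, $P_K$ is the metric (nearest point) projection of $H$ onto $K$; the limit defining $v$ is in norm. *)

theory Defs
  imports "HOL-Analysis.Analysis"
begin

definition fixset :: "'a set \<Rightarrow> ('a \<Rightarrow> 'a) \<Rightarrow> 'a set" where
  "fixset E S = {x \<in> E. S x = x}"

definition gen_hybrid :: "'a::real_normed_vector set \<Rightarrow> real \<Rightarrow> real \<Rightarrow> ('a \<Rightarrow> 'a) \<Rightarrow> bool" where
  "gen_hybrid E lam gam S \<longleftrightarrow> S ` E \<subseteq> E \<and>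
     (\<forall>x\<in>E. \<forall>y\<in>E. lam * (norm (S x - S y))\<^sup>2 + (1 - lam) * (norm (x - S y))\<^sup>2
        \<le> gam * (norm (S x - y))\<^sup>2 + (1 - gam) * (norm (x - y))\<^sup>2)"

definition metric_proj :: "'a::real_normed_vector set \<Rightarrow> 'a \<Rightarrow> 'a" where
  "metric_proj K z = (SOME p. p \<in> K \<and> (\<forall>y\<in>K. norm (z - p) \<le> norm (z - y)))"

definition weak_conv :: "(nat \<Rightarrow> 'a::real_inner) \<Rightarrow> 'a \<Rightarrow> bool" where
  "weak_conv x v \<longleftrightarrow> (\<forall>w. ((\<lambda>n. inner (x n) w) \<longlonglongrightarrow> inner v w))"

end

theory Submission
  imports Defs
begin

(*
  A generalized hybrid map with a fixed point is quasi-nonexpansive, so the iterates are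
  Fejer monotone with respect to F(S) and satisfy the descent inequality
    |x(n+1) - p|^2 <= |x n - p|^2 - alpha * beta n * (1 - beta n) * |x n - S (x n)|^2,
  which forces |S (x n) - x n| --> 0.  Fejer monotonicity makes the projections P_F (x n) a
  Cauchy sequence; call its limit v.

  Weak convergence is obtained without weak compactness, through asymptotic centres.  The
  asymptotic centre c of any subsequence lies in E; the hybrid inequality together with
  |S (x n) - x n| --> 0 shows that S c is asymptotically no farther from the subsequence than c,
  so S c = c by uniqueness of the centre; and the variational inequality for P_F (x n) then
  identifies c with v.  A subsequence staying on one side of a hyperplane through v would have
  a centre different from v.  Finally u n = P_E (x n) = x n because x n lies in E.
*)

lemma eventually_gt_if_liminf_pos:
  fixes f :: "nat \<Rightarrow> real"
  assumes "liminf (\<lambda>n. ereal (f n)) > 0"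
  obtains c where "0 < c" "eventually (\<lambda>n. c < f n) sequentially"
proof -
  obtain z :: ereal where z: "0 < z" "z < liminf (\<lambda>n. ereal (f n))"
    using dense[OF assms] by blast
  then obtain c where "z = ereal c"
    by (cases z) auto
  from less_LiminfD[OF z(2)] have "eventually (\<lambda>n. c < f n) sequentially"
    by (simp add: \<open>z = ereal c\<close>)
  moreover have "0 < c"
    using z(1) \<open>z = ereal c\<close> by simp
  ultimately show ?thesis
    using that by blast
qed

lemma tendsto_zero_if_dominated_by_decrements:
  fixes d g :: "nat \<Rightarrow> real"
  assumes "convergent d" "0 < c" "\<And>n. 0 \<le> g n"
    and "eventually (\<lambda>n. c * g n \<le> d n - d (Suc n)) sequentially"
  shows "g \<longlonglongrightarrow> 0"
proof -
  obtain L where lim: "d \<longlonglongrightarrow> L"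
    using assms(1) by (auto simp: convergent_def)
  have "(\<lambda>n. d n - d (Suc n)) \<longlonglongrightarrow> 0"
    using tendsto_diff[OF lim LIMSEQ_Suc[OF lim]] by simp
  then have decrements: "(\<lambda>n. (d n - d (Suc n)) / c) \<longlonglongrightarrow> 0"
    by (rule tendsto_divide_zero)
  have "eventually (\<lambda>n. norm (g n) \<le> (d n - d (Suc n)) / c) sequentially"
    using assms(4)
  proof eventually_elim
    case (elim n)
    then show ?case
      using assms(2) assms(3)[of n] by (simp add: pos_le_divide_eq mult.commute)
  qed
  from Lim_null_comparison[OF this decrements] show ?thesis .
qed

lemma norm_convex_combination_squared:
  fixes a b :: "'a::real_inner"
  shows "(norm ((1 - t) *\<^sub>R a + t *\<^sub>R b))\<^sup>2
    = (1 - t) * (norm a)\<^sup>2 + t * (norm b)\<^sup>2 - t * (1 - t) * (norm (a - b))\<^sup>2"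
  by (simp add: power2_norm_eq_inner inner_add_left inner_add_right inner_diff_left
      inner_diff_right inner_commute algebra_simps)

lemma norm_diff_midpoint_squared:
  fixes z a b :: "'a::real_inner"
  shows "(norm (z - ((1/2) *\<^sub>R a + (1/2) *\<^sub>R b)))\<^sup>2
    = (norm (z - a))\<^sup>2 / 2 + (norm (z - b))\<^sup>2 / 2 - (norm (a - b))\<^sup>2 / 4"
  by (simp add: power2_norm_eq_inner inner_add_left inner_add_right inner_diff_left
      inner_diff_right inner_commute algebra_simps field_simps)

lemma norm_diff_squared_expand:
  fixes y c v :: "'a::real_inner"
  shows "(norm (y - c))\<^sup>2 = (norm (y - v))\<^sup>2 - 2 * inner (y - v) (c - v) + (norm (c - v))\<^sup>2"
  by (simp add: power2_norm_eq_inner inner_diff_left inner_diff_right inner_commute algebra_simps)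

lemma abs_diff_norm_squared_le:
  fixes p y y' :: "'a::real_normed_vector"
  shows "\<bar>(norm (y - p))\<^sup>2 - (norm (y' - p))\<^sup>2\<bar> \<le> (2 * norm p + norm y + norm y') * norm (y - y')"
proof -
  have "\<bar>norm (y - p) - norm (y' - p)\<bar> \<le> norm (y - y')"
    using norm_triangle_ineq3[of "y - p" "y' - p"] by simp
  moreover have "norm (y - p) + norm (y' - p) \<le> 2 * norm p + norm y + norm y'"
    using norm_triangle_ineq4[of y p] norm_triangle_ineq4[of y' p] by simp
  ultimately have "\<bar>norm (y - p) - norm (y' - p)\<bar> * (norm (y - p) + norm (y' - p))
      \<le> norm (y - y') * (2 * norm p + norm y + norm y')"
    by (intro mult_mono) auto
  then show ?thesis
    by (simp add: power2_eq_square square_diff_square_factored abs_mult mult.commute)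
qed

lemma tendsto_norm_squared_diff_zero:
  assumes "bounded (range y)" "(\<lambda>k. y' k - y k) \<longlonglongrightarrow> 0"
  shows "(\<lambda>k. (norm (y' k - p))\<^sup>2 - (norm (y k - p))\<^sup>2) \<longlonglongrightarrow> 0"
proof -
  obtain B where B: "\<And>k. norm (y k) \<le> B"
    using assms(1) by (auto simp: bounded_iff)
  obtain B' where B': "\<And>k. norm (y' k - y k) \<le> B'"
    using convergent_imp_Bseq[OF convergentI[OF assms(2)]] by (auto simp: Bseq_def)
  define C where "C = 2 * norm p + 2 * B + B'"
  have bound: "norm ((norm (y' k - p))\<^sup>2 - (norm (y k - p))\<^sup>2) \<le> C * norm (y' k - y k)" for k
  proof -
    have "norm (y' k) \<le> B + B'"
      using norm_triangle_sub[of "y' k" "y k"] B[of k] B'[of k] by simp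
    then have "2 * norm p + norm (y' k) + norm (y k) \<le> C"
      using B[of k] unfolding C_def by linarith
    then have "(2 * norm p + norm (y' k) + norm (y k)) * norm (y' k - y k) \<le> C * norm (y' k - y k)"
      by (rule mult_right_mono) simp
    with abs_diff_norm_squared_le[of "y' k" p "y k"] show ?thesis
      by simp
  qed
  have "(\<lambda>k. C * norm (y' k - y k)) \<longlonglongrightarrow> 0"
    using tendsto_mult_right_zero[OF tendsto_norm_zero[OF assms(2)]] .
  then show ?thesis
    by (rule Lim_null_comparison[OF always_eventually, rotated]) (use bound in blast)
qed

lemma Cauchy_if_dist_squared_le:
  fixes q :: "nat \<Rightarrow> 'a::metric_space" and r :: "nat \<Rightarrow> real"
  assumes "r \<longlonglongrightarrow> 0" "\<And>m n. (dist (q m) (q n))\<^sup>2 \<le> r m + r n"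
  shows "Cauchy q"
proof (rule metric_CauchyI)
  fix e :: real assume "0 < e"
  then obtain M where M: "\<And>n. M \<le> n \<Longrightarrow> r n < e\<^sup>2 / 2"
    using order_tendstoD(2)[OF assms(1), of "e\<^sup>2 / 2"] by (auto simp: eventually_sequentially)
  have "dist (q m) (q n) < e" if "M \<le> m" "M \<le> n" for m n
  proof -
    have "(dist (q m) (q n))\<^sup>2 < e\<^sup>2"
      using assms(2)[of m n] M[OF that(1)] M[OF that(2)] by linarith
    then show ?thesis
      using \<open>0 < e\<close> by (simp add: power_less_imp_less_base)
  qed
  then show "\<exists>M. \<forall>m\<ge>M. \<forall>n\<ge>M. dist (q m) (q n) < e"
    by blast
qed

lemma midpoint_strongly_convex_attains_min:
  fixes \<phi> :: "'a::{real_inner,complete_space} \<Rightarrow> real"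
  assumes "K \<noteq> {}" "closed K" "convex K" "continuous_on K \<phi>"
    and nonneg: "\<And>y. y \<in> K \<Longrightarrow> 0 \<le> \<phi> y"
    and midpoint: "\<And>a b. a \<in> K \<Longrightarrow> b \<in> K \<Longrightarrow>
        \<phi> ((1/2) *\<^sub>R a + (1/2) *\<^sub>R b) \<le> (\<phi> a + \<phi> b) / 2 - (norm (a - b))\<^sup>2 / 4"
  obtains c where "c \<in> K" "\<And>y. y \<in> K \<Longrightarrow> \<phi> c \<le> \<phi> y"
proof -
  define m where "m = Inf (\<phi> ` K)"
  have m_le: "m \<le> \<phi> y" if "y \<in> K" for y
    unfolding m_def using nonneg that by (intro cInf_lower) (auto intro: bdd_belowI[of _ 0])
  have "\<exists>z\<in>K. \<phi> z < m + 1 / real (Suc n)" for n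
    using cInf_lessD[of "\<phi> ` K" "m + 1 / real (Suc n)"] \<open>K \<noteq> {}\<close> by (auto simp: m_def)
  then obtain z where z_in: "\<And>n. z n \<in> K" and z_less: "\<And>n. \<phi> (z n) < m + 1 / real (Suc n)"
    by metis
  have z_close: "(norm (z i - z j))\<^sup>2 \<le> 2 * (1 / real (Suc i)) + 2 * (1 / real (Suc j))" for i j
  proof -
    have "(1/2) *\<^sub>R z i + (1/2) *\<^sub>R z j \<in> K"
      using convexD[OF \<open>convex K\<close> z_in z_in, of "1/2" "1/2"] by simp
    from m_le[OF this] show ?thesis
      using midpoint[OF z_in z_in, of i j] z_less[of i] z_less[of j] by argo
  qed
  have "(\<lambda>n. 2 * (1 / real (Suc n))) \<longlonglongrightarrow> 2 * 0"
    by (intro tendsto_mult tendsto_const LIMSEQ_Suc[OF lim_inverse_n'])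
  then have "Cauchy z"
    using z_close by (intro Cauchy_if_dist_squared_le) (simp_all add: dist_norm)
  then obtain c where z_lim: "z \<longlonglongrightarrow> c"
    using Cauchy_convergent convergent_def by blast
  have "c \<in> K"
    using closed_sequentially[OF \<open>closed K\<close> _ z_lim] z_in by blast
  have "(\<lambda>n. \<phi> (z n)) \<longlonglongrightarrow> \<phi> c"
    using continuous_on_tendsto_compose[OF \<open>continuous_on K \<phi>\<close> z_lim \<open>c \<in> K\<close>] z_in by simp
  moreover have "(\<lambda>n. m + 1 / real (Suc n)) \<longlonglongrightarrow> m + 0"
    by (intro tendsto_intros LIMSEQ_Suc[OF lim_inverse_n'])
  ultimately have "\<phi> c \<le> m"
    using z_less by (intro LIMSEQ_le) (auto intro: less_imp_le)
  then show ?thesis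
    using that \<open>c \<in> K\<close> m_le by force
qed

lemma
  fixes K :: "'a::{real_inner,complete_space} set"
  assumes "K \<noteq> {}" "closed K" "convex K"
  shows metric_proj_in: "metric_proj K z \<in> K"
    and metric_proj_le: "\<And>y. y \<in> K \<Longrightarrow> norm (z - metric_proj K z) \<le> norm (z - y)"
proof -
  obtain p where "p \<in> K" and "\<And>y. y \<in> K \<Longrightarrow> (norm (z - p))\<^sup>2 \<le> (norm (z - y))\<^sup>2"
  proof (rule midpoint_strongly_convex_attains_min[OF assms, of "\<lambda>y. (norm (z - y))\<^sup>2"])
    show "continuous_on K (\<lambda>y. (norm (z - y))\<^sup>2)"
      by (intro continuous_intros)
  qed (simp_all add: norm_diff_midpoint_squared)
  then have "\<exists>p. p \<in> K \<and> (\<forall>y\<in>K. norm (z - p) \<le> norm (z - y))"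
    by (meson norm_ge_zero power2_le_imp_le)
  from someI_ex[OF this] show "metric_proj K z \<in> K" "\<And>y. y \<in> K \<Longrightarrow> norm (z - metric_proj K z) \<le> norm (z - y)"
    unfolding metric_proj_def by blast+
qed

lemma metric_proj_inner_le:
  fixes K :: "'a::{real_inner,complete_space} set"
  assumes "K \<noteq> {}" "closed K" "convex K" "y \<in> K"
  shows "inner (z - metric_proj K z) (y - metric_proj K z) \<le> 0"
  using any_closest_point_dot[OF assms(3,2) metric_proj_in[OF assms(1-3)] assms(4)]
    metric_proj_le[OF assms(1-3)] by (simp add: dist_norm)

lemma metric_proj_pythagoras:
  fixes K :: "'a::{real_inner,complete_space} set"
  assumes "K \<noteq> {}" "closed K" "convex K" "y \<in> K"
  shows "(norm (y - metric_proj K z))\<^sup>2 + (norm (metric_proj K z - z))\<^sup>2 \<le> (norm (y - z))\<^sup>2"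
  using metric_proj_inner_le[OF assms, of z] norm_diff_squared_expand[of y z "metric_proj K z"]
  by (simp add: norm_minus_commute inner_commute)

(* The limit superior of a bounded sequence; if the sequence is unbounded above, the set is empty
   and the value is junk. *)
definition real_limsup :: "(nat \<Rightarrow> real) \<Rightarrow> real" where
  "real_limsup f = Inf {r. eventually (\<lambda>k. f k \<le> r) sequentially}"

lemma real_limsup_le:
  assumes "\<And>k. 0 \<le> f k" "eventually (\<lambda>k. f k \<le> r) sequentially"
  shows "real_limsup f \<le> r"
  unfolding real_limsup_def
proof (rule cInf_lower)
  show "r \<in> {r. eventually (\<lambda>k. f k \<le> r) sequentially}"
    using assms(2) by simp
  show "bdd_below {r. eventually (\<lambda>k. f k \<le> r) sequentially}"
  proof (rule bdd_belowI)
    fix r' assume "r' \<in> {r. eventually (\<lambda>k. f k \<le> r) sequentially}"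
    then obtain N where "\<forall>k\<ge>N. f k \<le> r'"
      by (auto simp: eventually_sequentially)
    then show "0 \<le> r'"
      using assms(1)[of N] by force
  qed
qed

lemma eventually_le_real_limsup:
  assumes "\<And>k. f k \<le> B" "0 < e"
  shows "eventually (\<lambda>k. f k \<le> real_limsup f + e) sequentially"
proof -
  let ?R = "{r. eventually (\<lambda>k. f k \<le> r) sequentially}"
  have "?R \<noteq> {}"
    using assms(1) by (auto intro!: exI[of _ B])
  then obtain r where "r \<in> ?R" "r < real_limsup f + e"
    using cInf_lessD[of ?R "Inf ?R + e"] assms(2) unfolding real_limsup_def by auto
  then show ?thesis
    by (auto elim: eventually_mono)
qed

definition asymptotic_sqradius :: "(nat \<Rightarrow> 'a::real_normed_vector) \<Rightarrow> 'a \<Rightarrow> real" where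
  "asymptotic_sqradius y z = real_limsup (\<lambda>k. (norm (y k - z))\<^sup>2)"

definition asymptotic_center :: "(nat \<Rightarrow> 'a::real_normed_vector) \<Rightarrow> 'a \<Rightarrow> bool" where
  "asymptotic_center y c \<longleftrightarrow> (\<forall>z. asymptotic_sqradius y c \<le> asymptotic_sqradius y z)"

lemma asymptotic_sqradius_le:
  assumes "\<And>e. 0 < e \<Longrightarrow> eventually (\<lambda>k. (norm (y k - z))\<^sup>2 \<le> r + e) sequentially"
  shows "asymptotic_sqradius y z \<le> r"
  unfolding asymptotic_sqradius_def
  by (rule field_le_epsilon, rule real_limsup_le) (simp_all add: assms)

lemma eventually_le_asymptotic_sqradius:
  assumes "bounded (range y)" "0 < e"
  shows "eventually (\<lambda>k. (norm (y k - z))\<^sup>2 \<le> asymptotic_sqradius y z + e) sequentially"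
proof -
  obtain M where M: "\<And>k. norm (y k) \<le> M"
    using assms(1) by (auto simp: bounded_iff)
  have "(norm (y k - z))\<^sup>2 \<le> (M + norm z)\<^sup>2" for k
    using norm_triangle_ineq4[of "y k" z] M[of k] by (intro power_mono) auto
  then show ?thesis
    unfolding asymptotic_sqradius_def by (rule eventually_le_real_limsup[OF _ assms(2)])
qed

lemma asymptotic_sqradius_nonneg:
  assumes "bounded (range y)"
  shows "0 \<le> asymptotic_sqradius y z"
proof (rule field_le_epsilon)
  fix e :: real assume "0 < e"
  then obtain N where "\<forall>k\<ge>N. (norm (y k - z))\<^sup>2 \<le> asymptotic_sqradius y z + e"
    using eventually_le_asymptotic_sqradius[OF assms] unfolding eventually_sequentially by blast
  then have "(norm (y N - z))\<^sup>2 \<le> asymptotic_sqradius y z + e"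
    by simp
  then show "0 \<le> asymptotic_sqradius y z + e"
    using zero_le_power2[of "norm (y N - z)"] by linarith
qed

lemma asymptotic_sqradius_midpoint:
  fixes y :: "nat \<Rightarrow> 'a::real_inner"
  assumes "bounded (range y)"
  shows "asymptotic_sqradius y ((1/2) *\<^sub>R a + (1/2) *\<^sub>R b)
    \<le> (asymptotic_sqradius y a + asymptotic_sqradius y b) / 2 - (norm (a - b))\<^sup>2 / 4"
proof (rule asymptotic_sqradius_le)
  fix e :: real assume "0 < e"
  with eventually_le_asymptotic_sqradius[OF assms]
  have "eventually (\<lambda>k. (norm (y k - a))\<^sup>2 \<le> asymptotic_sqradius y a + e) sequentially"
    "eventually (\<lambda>k. (norm (y k - b))\<^sup>2 \<le> asymptotic_sqradius y b + e) sequentially"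
    by auto
  then show "eventually (\<lambda>k. (norm (y k - ((1/2) *\<^sub>R a + (1/2) *\<^sub>R b)))\<^sup>2
      \<le> (asymptotic_sqradius y a + asymptotic_sqradius y b) / 2 - (norm (a - b))\<^sup>2 / 4 + e) sequentially"
  proof eventually_elim
    case (elim k)
    then show ?case
      using norm_diff_midpoint_squared[of "y k" a b] by argo
  qed
qed

lemma asymptotic_sqradius_lipschitz:
  assumes "\<And>k. norm (y k) \<le> M"
  shows "\<bar>asymptotic_sqradius y z - asymptotic_sqradius y z'\<bar>
    \<le> (2 * M + norm z + norm z') * norm (z - z')"
proof -
  have bounded: "bounded (range y)"
    using assms by (auto simp: bounded_iff)
  have le: "asymptotic_sqradius y z \<le> asymptotic_sqradius y z' + (2 * M + norm z + norm z') * norm (z - z')"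
    for z z'
  proof (rule asymptotic_sqradius_le)
    fix e :: real assume "0 < e"
    from eventually_le_asymptotic_sqradius[OF bounded this, of z']
    show "eventually (\<lambda>k. (norm (y k - z))\<^sup>2
        \<le> asymptotic_sqradius y z' + (2 * M + norm z + norm z') * norm (z - z') + e) sequentially"
    proof eventually_elim
      case (elim k)
      have "\<bar>(norm (z - y k))\<^sup>2 - (norm (z' - y k))\<^sup>2\<bar> \<le> (2 * norm (y k) + norm z + norm z') * norm (z - z')"
        by (rule abs_diff_norm_squared_le)
      also have "\<dots> \<le> (2 * M + norm z + norm z') * norm (z - z')"
        using assms[of k] by (intro mult_right_mono) auto
      finally show ?case
        using elim by (simp add: norm_minus_commute)
    qed
  qed
  show ?thesis
    using le[of z z'] le[of z' z] by (simp add: norm_minus_commute algebra_simps)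
qed

lemma continuous_on_asymptotic_sqradius:
  assumes "bounded (range y)"
  shows "continuous_on UNIV (asymptotic_sqradius y)"
  unfolding continuous_on_sequentially
proof (intro allI ballI impI)
  fix zs and c :: 'a assume "(\<forall>n. zs n \<in> UNIV) \<and> zs \<longlonglongrightarrow> c"
  then have lim: "zs \<longlonglongrightarrow> c" by simp
  obtain M where M: "\<And>k. norm (y k) \<le> M"
    using assms by (auto simp: bounded_iff)
  have "(\<lambda>n. norm (zs n - c)) \<longlonglongrightarrow> 0"
    using tendsto_norm_zero[OF LIM_zero[OF lim]] .
  then have "(\<lambda>n. (2 * M + norm (zs n) + norm c) * norm (zs n - c)) \<longlonglongrightarrow> (2 * M + norm c + norm c) * 0"
    by (intro tendsto_mult tendsto_add tendsto_const tendsto_norm lim)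
  then have bound_lim: "(\<lambda>n. (2 * M + norm (zs n) + norm c) * norm (zs n - c)) \<longlonglongrightarrow> 0"
    by simp
  have "\<forall>n. norm (asymptotic_sqradius y (zs n) - asymptotic_sqradius y c)
      \<le> (2 * M + norm (zs n) + norm c) * norm (zs n - c)"
    using asymptotic_sqradius_lipschitz[OF M] by simp
  from Lim_null_comparison[OF always_eventually[OF this] bound_lim]
  show "(asymptotic_sqradius y \<circ> zs) \<longlonglongrightarrow> asymptotic_sqradius y c"
    by (simp add: LIM_zero_iff o_def)
qed

lemma asymptotic_center_exists:
  fixes y :: "nat \<Rightarrow> 'a::{real_inner,complete_space}"
  assumes "bounded (range y)"
  obtains c where "asymptotic_center y c"
  using midpoint_strongly_convex_attains_min[of UNIV "asymptotic_sqradius y"]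
    continuous_on_asymptotic_sqradius[OF assms] asymptotic_sqradius_nonneg[OF assms]
    asymptotic_sqradius_midpoint[OF assms]
  unfolding asymptotic_center_def by auto

lemma asymptotic_center_in:
  fixes K :: "'a::{real_inner,complete_space} set"
  assumes "closed K" "convex K" "\<And>k. y k \<in> K" "bounded (range y)" "asymptotic_center y c"
  shows "c \<in> K"
proof -
  have "K \<noteq> {}"
    using assms(3) by blast
  define p where "p = metric_proj K c"
  have "asymptotic_sqradius y p \<le> asymptotic_sqradius y c - (norm (p - c))\<^sup>2"
  proof (rule asymptotic_sqradius_le)
    fix e :: real assume "0 < e"
    from eventually_le_asymptotic_sqradius[OF assms(4) this, of c]
    show "eventually (\<lambda>k. (norm (y k - p))\<^sup>2 \<le> asymptotic_sqradius y c - (norm (p - c))\<^sup>2 + e) sequentially"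
    proof eventually_elim
      case (elim k)
      then show ?case
        using metric_proj_pythagoras[OF \<open>K \<noteq> {}\<close> assms(1,2,3), of k c] unfolding p_def
        by linarith
    qed
  qed
  moreover have "asymptotic_sqradius y c \<le> asymptotic_sqradius y p"
    using assms(5) by (simp add: asymptotic_center_def)
  ultimately have "(norm (p - c))\<^sup>2 \<le> 0"
    by linarith
  then have "p = c"
    by simp
  then show ?thesis
    using metric_proj_in[OF \<open>K \<noteq> {}\<close> assms(1,2), of c] by (simp add: p_def)
qed

lemma asymptotic_center_fixed:
  fixes y :: "nat \<Rightarrow> 'a::real_inner"
  assumes "bounded (range y)" "asymptotic_center y c" "err \<longlonglongrightarrow> 0"
    and "\<And>k. (norm (y k - T c))\<^sup>2 \<le> (norm (y k - c))\<^sup>2 + err k"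
  shows "T c = c"
proof -
  have "asymptotic_sqradius y (T c) \<le> asymptotic_sqradius y c"
  proof (rule asymptotic_sqradius_le)
    fix e :: real assume "0 < e"
    then have "0 < e / 2"
      by simp
    then have "eventually (\<lambda>k. err k < e / 2) sequentially"
      "eventually (\<lambda>k. (norm (y k - c))\<^sup>2 \<le> asymptotic_sqradius y c + e / 2) sequentially"
      using order_tendstoD(2)[OF assms(3)] eventually_le_asymptotic_sqradius[OF assms(1)] by blast+
    then show "eventually (\<lambda>k. (norm (y k - T c))\<^sup>2 \<le> asymptotic_sqradius y c + e) sequentially"
    proof eventually_elim
      case (elim k)
      then show ?case
        using assms(4)[of k] by linarith
    qed
  qed
  moreover have "asymptotic_sqradius y c \<le> asymptotic_sqradius y ((1/2) *\<^sub>R c + (1/2) *\<^sub>R T c)"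
    using assms(2) by (simp add: asymptotic_center_def)
  moreover note asymptotic_sqradius_midpoint[OF assms(1), of c "T c"]
  ultimately have "(norm (c - T c))\<^sup>2 \<le> 0"
    by argo
  then show ?thesis
    by simp
qed

lemma asymptotic_center_eqI:
  fixes y :: "nat \<Rightarrow> 'a::real_inner"
  assumes "bounded (range y)" "asymptotic_center y c"
    and "(\<lambda>k. (norm (y k - v))\<^sup>2) \<longlonglongrightarrow> D"
    and "\<And>e. 0 < e \<Longrightarrow> eventually (\<lambda>k. inner (y k - v) (c - v) \<le> e) sequentially"
  shows "c = v"
proof -
  have "asymptotic_sqradius y v \<le> D"
  proof (rule asymptotic_sqradius_le)
    fix e :: real assume "0 < e"
    then have "eventually (\<lambda>k. (norm (y k - v))\<^sup>2 < D + e) sequentially"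
      using order_tendstoD(2)[OF assms(3)] by simp
    then show "eventually (\<lambda>k. (norm (y k - v))\<^sup>2 \<le> D + e) sequentially"
      by (rule eventually_mono) simp
  qed
  moreover have "D + (norm (c - v))\<^sup>2 \<le> asymptotic_sqradius y c"
  proof (rule field_le_epsilon)
    fix e :: real assume "0 < e"
    then have "0 < e / 4"
      by simp
    have "eventually (\<lambda>k. inner (y k - v) (c - v) \<le> e / 4 \<and> D - e / 4 < (norm (y k - v))\<^sup>2
        \<and> (norm (y k - c))\<^sup>2 \<le> asymptotic_sqradius y c + e / 4) sequentially"
      using assms(4)[OF \<open>0 < e / 4\<close>] order_tendstoD(1)[OF assms(3), of "D - e / 4"]
        eventually_le_asymptotic_sqradius[OF assms(1) \<open>0 < e / 4\<close>, of c] \<open>0 < e / 4\<close>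
      by (intro eventually_conj) simp_all
    then obtain k where "inner (y k - v) (c - v) \<le> e / 4" "D - e / 4 < (norm (y k - v))\<^sup>2"
      "(norm (y k - c))\<^sup>2 \<le> asymptotic_sqradius y c + e / 4"
      unfolding eventually_sequentially by blast
    then show "D + (norm (c - v))\<^sup>2 \<le> asymptotic_sqradius y c + e"
      using norm_diff_squared_expand[of "y k" c v] by linarith
  qed
  moreover have "asymptotic_sqradius y c \<le> asymptotic_sqradius y v"
    using assms(2) by (simp add: asymptotic_center_def)
  ultimately have "(norm (c - v))\<^sup>2 \<le> 0"
    by linarith
  then show ?thesis
    by simp
qed

lemma asymptotic_center_not_separated:
  fixes y :: "nat \<Rightarrow> 'a::real_inner"
  assumes "bounded (range y)" "asymptotic_center y v" "0 < \<epsilon>"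
  shows "\<exists>k. inner (y k - v) w < \<epsilon>"
proof (rule ccontr)
  assume "\<nexists>k. inner (y k - v) w < \<epsilon>"
  then have separated: "\<epsilon> \<le> inner (y k - v) w" for k
    by (simp add: not_less)
  then have "w \<noteq> 0"
    using \<open>0 < \<epsilon>\<close> by (metis inner_zero_right not_le)
  define t where "t = \<epsilon> / (norm w)\<^sup>2"
  have "0 < t"
    using \<open>0 < \<epsilon>\<close> \<open>w \<noteq> 0\<close> by (simp add: t_def)
  have "asymptotic_sqradius y (v + t *\<^sub>R w) \<le> asymptotic_sqradius y v - 2 * t * \<epsilon> + t\<^sup>2 * (norm w)\<^sup>2"
  proof (rule asymptotic_sqradius_le)
    fix e :: real assume "0 < e"
    from eventually_le_asymptotic_sqradius[OF assms(1) this, of v]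
    show "eventually (\<lambda>k. (norm (y k - (v + t *\<^sub>R w)))\<^sup>2
        \<le> asymptotic_sqradius y v - 2 * t * \<epsilon> + t\<^sup>2 * (norm w)\<^sup>2 + e) sequentially"
    proof eventually_elim
      case (elim k)
      have "t * \<epsilon> \<le> t * inner (y k - v) w"
        using separated[of k] \<open>0 < t\<close> by simp
      moreover have "(norm (y k - (v + t *\<^sub>R w)))\<^sup>2
          = (norm (y k - v))\<^sup>2 - 2 * (t * inner (y k - v) w) + t\<^sup>2 * (norm w)\<^sup>2"
        using norm_diff_squared_expand[of "y k" "v + t *\<^sub>R w" v] \<open>0 < t\<close>
        by (simp add: power_mult_distrib)
      ultimately show ?case
        using elim by linarith
    qed
  qed
  moreover have "t\<^sup>2 * (norm w)\<^sup>2 = t * \<epsilon>"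
    using \<open>w \<noteq> 0\<close> by (simp add: t_def power2_eq_square)
  moreover have "asymptotic_sqradius y v \<le> asymptotic_sqradius y (v + t *\<^sub>R w)"
    using assms(2) by (simp add: asymptotic_center_def)
  ultimately show False
    using mult_pos_pos[OF \<open>0 < t\<close> \<open>0 < \<epsilon>\<close>] by linarith
qed

lemma weak_conv_if_asymptotic_centers:
  fixes x :: "nat \<Rightarrow> 'a::{real_inner,complete_space}"
  assumes "bounded (range x)"
    and "\<And>s c. strict_mono s \<Longrightarrow> asymptotic_center (x \<circ> s) c \<Longrightarrow> c = v"
  shows "weak_conv x v"
proof -
  have finite_side: "finite {n. r \<le> inner (x n - v) w}" if r_pos: "0 < r" for r w
  proof (rule ccontr)
    assume "infinite {n. r \<le> inner (x n - v) w}"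
    then obtain s :: "nat \<Rightarrow> nat" where s: "strict_mono s" "\<And>k. r \<le> inner (x (s k) - v) w"
      using infinite_enumerate by blast
    have bounded: "bounded (range (x \<circ> s))"
      using assms(1) by (rule bounded_subset) auto
    obtain c where "asymptotic_center (x \<circ> s) c"
      using asymptotic_center_exists[OF bounded] .
    then have "asymptotic_center (x \<circ> s) v"
      using assms(2)[OF s(1)] by simp
    then obtain k where "inner ((x \<circ> s) k - v) w < r"
      using asymptotic_center_not_separated[OF bounded _ r_pos] by blast
    with s(2)[of k] show False
      by simp
  qed
  show ?thesis
    unfolding weak_conv_def
  proof
    fix w
    have "(\<lambda>n. inner (x n - v) w) \<longlonglongrightarrow> 0"
    proof (rule tendstoI)
      fix r :: real assume "0 < r"
      have "{n. \<not> dist (inner (x n - v) w) 0 < r}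
          \<subseteq> {n. r \<le> inner (x n - v) w} \<union> {n. r \<le> inner (x n - v) (- w)}"
        by auto
      then have "finite {n. \<not> dist (inner (x n - v) w) 0 < r}"
        using finite_side[OF \<open>0 < r\<close>] by (meson finite_Un finite_subset)
      then show "eventually (\<lambda>n. dist (inner (x n - v) w) 0 < r) sequentially"
        by (simp only: cofinite_eq_sequentially[symmetric] eventually_cofinite)
    qed
    then show "(\<lambda>n. inner (x n) w) \<longlonglongrightarrow> inner v w"
      by (simp add: inner_diff_left LIM_zero_iff)
  qed
qed

definition fejer_monotone :: "'a::real_normed_vector set \<Rightarrow> (nat \<Rightarrow> 'a) \<Rightarrow> bool" where
  "fejer_monotone F x \<longleftrightarrow> (\<forall>p\<in>F. \<forall>n. norm (x (Suc n) - p) \<le> norm (x n - p))"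

lemma fejer_monotone_decseq:
  assumes "fejer_monotone F x" "p \<in> F"
  shows "decseq (\<lambda>n. norm (x n - p))"
proof (rule decseq_SucI)
  show "norm (x (Suc n) - p) \<le> norm (x n - p)" for n
    using assms unfolding fejer_monotone_def by blast
qed

lemma fejer_monotone_bounded:
  assumes "fejer_monotone F x" "F \<noteq> {}"
  shows "bounded (range x)"
proof -
  obtain p where "p \<in> F"
    using assms(2) by blast
  have "norm (x n) \<le> norm p + norm (x 0 - p)" for n
    using norm_triangle_sub[of "x n" p] decseqD[OF fejer_monotone_decseq[OF assms(1) \<open>p \<in> F\<close>], of 0 n]
    by simp
  then show ?thesis
    by (auto simp: bounded_iff)
qed

lemma fejer_monotone_dist_convergent:
  assumes "fejer_monotone F x" "p \<in> F"
  obtains D where "(\<lambda>n. (norm (x n - p))\<^sup>2) \<longlonglongrightarrow> D"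
proof -
  obtain L where "(\<lambda>n. norm (x n - p)) \<longlonglongrightarrow> L"
    using decseq_convergent[OF fejer_monotone_decseq[OF assms], of 0] by auto
  then have "(\<lambda>n. (norm (x n - p))\<^sup>2) \<longlonglongrightarrow> L\<^sup>2"
    by (rule tendsto_power)
  then show ?thesis
    by (rule that)
qed

lemma metric_proj_fejer_step:
  fixes F :: "'a::{real_inner,complete_space} set"
  assumes "F \<noteq> {}" "closed F" "convex F" "fejer_monotone F x" "n \<le> m"
  shows "(norm (metric_proj F (x m) - metric_proj F (x n)))\<^sup>2
    \<le> (norm (x n - metric_proj F (x n)))\<^sup>2 - (norm (x m - metric_proj F (x m)))\<^sup>2"
proof -
  let ?q = "\<lambda>n. metric_proj F (x n)"
  have "(norm (?q n - ?q m))\<^sup>2 + (norm (?q m - x m))\<^sup>2 \<le> (norm (?q n - x m))\<^sup>2"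
    by (rule metric_proj_pythagoras[OF assms(1-3) metric_proj_in[OF assms(1-3)]])
  then have "(norm (?q m - ?q n))\<^sup>2 + (norm (x m - ?q m))\<^sup>2 \<le> (norm (x m - ?q n))\<^sup>2"
    by (simp add: norm_minus_commute)
  moreover have "(norm (x m - ?q n))\<^sup>2 \<le> (norm (x n - ?q n))\<^sup>2"
    using decseqD[OF fejer_monotone_decseq[OF assms(4) metric_proj_in[OF assms(1-3)]] assms(5)]
    by (simp add: power_mono)
  ultimately show ?thesis
    by linarith
qed

lemma fejer_monotone_metric_proj_convergent:
  fixes F :: "'a::{real_inner,complete_space} set"
  assumes "F \<noteq> {}" "closed F" "convex F" "fejer_monotone F x"
  obtains v where "v \<in> F" "(\<lambda>n. metric_proj F (x n)) \<longlonglongrightarrow> v"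
proof -
  define q where "q n = metric_proj F (x n)" for n
  define d where "d n = (norm (x n - q n))\<^sup>2" for n
  have step: "(norm (q m - q n))\<^sup>2 \<le> d n - d m" if "n \<le> m" for m n
    unfolding q_def d_def by (rule metric_proj_fejer_step[OF assms that])
  have "decseq d"
  proof (rule decseq_SucI)
    fix n
    have "(norm (q (Suc n) - q n))\<^sup>2 \<le> d n - d (Suc n)"
      by (rule step) simp
    then show "d (Suc n) \<le> d n"
      using zero_le_power2[of "norm (q (Suc n) - q n)"] by linarith
  qed
  then obtain L where "d \<longlonglongrightarrow> L" "\<And>n. L \<le> d n"
    using decseq_convergent[of d 0] by (auto simp: d_def)
  then have "(\<lambda>n. d n - L) \<longlonglongrightarrow> 0"
    by (simp add: LIM_zero)
  moreover have "(dist (q m) (q n))\<^sup>2 \<le> (d m - L) + (d n - L)" for m n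
  proof (cases "n \<le> m")
    case True
    then show ?thesis
      using step[OF True] \<open>L \<le> d m\<close> by (simp add: dist_norm)
  next
    case False
    then have "(norm (q n - q m))\<^sup>2 \<le> d m - d n"
      by (intro step) simp
    then show ?thesis
      using \<open>L \<le> d n\<close> by (simp add: dist_norm norm_minus_commute)
  qed
  ultimately have "Cauchy q"
    by (rule Cauchy_if_dist_squared_le)
  then obtain v where "q \<longlonglongrightarrow> v"
    using Cauchy_convergent convergent_def by blast
  have "q n \<in> F" for n
    unfolding q_def by (rule metric_proj_in[OF assms(1-3)])
  with \<open>q \<longlonglongrightarrow> v\<close> have "v \<in> F"
    using closed_sequentially[OF assms(2)] by blast
  with \<open>q \<longlonglongrightarrow> v\<close> show ?thesis
    using that unfolding q_def by blast
qed

lemma metric_proj_limit_inner_le: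
  fixes F :: "'a::{real_inner,complete_space} set"
  assumes "F \<noteq> {}" "closed F" "convex F" "bounded (range x)"
    and "(\<lambda>n. metric_proj F (x n)) \<longlonglongrightarrow> v" "p \<in> F" "0 < e"
  shows "eventually (\<lambda>n. inner (x n - v) (p - v) \<le> e) sequentially"
proof -
  define q where "q n = metric_proj F (x n)" for n
  have q_lim: "q \<longlonglongrightarrow> v"
    using assms(5) unfolding q_def .
  have "Bseq (\<lambda>n. x n - v)"
    using Bseq_add[of x "- v"] assms(4) by (simp add: Bseq_eq_bounded)
  moreover have "Zfun (\<lambda>n. q n - v) sequentially"
    using q_lim by (simp add: tendsto_Zfun_iff)
  ultimately have "(\<lambda>n. inner (x n - v) (q n - v)) \<longlonglongrightarrow> 0"
    using bounded_bilinear.Bfun_prod_Zfun[OF bounded_bilinear_inner] by (simp add: tendsto_Zfun_iff)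
  moreover have "(\<lambda>n. inner (q n - v) (p - q n)) \<longlonglongrightarrow> inner (v - v) (p - v)"
    using tendsto_inner[OF tendsto_diff[OF q_lim tendsto_const] tendsto_diff[OF tendsto_const q_lim]] .
  ultimately have "(\<lambda>n. inner (x n - v) (q n - v) + inner (q n - v) (p - q n)) \<longlonglongrightarrow> 0 + 0"
    using tendsto_add by fastforce
  then have "eventually (\<lambda>n. inner (x n - v) (q n - v) + inner (q n - v) (p - q n) < e) sequentially"
    using order_tendstoD(2)[of _ "0 + 0" _ e] assms(7) by simp
  then show ?thesis
  proof (rule eventually_mono)
    fix n
    assume "inner (x n - v) (q n - v) + inner (q n - v) (p - q n) < e"
    moreover have "inner (x n - q n) (p - q n) \<le> 0"
      unfolding q_def by (rule metric_proj_inner_le[OF assms(1-3,6)])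
    moreover have "inner (x n - v) (p - v)
        = inner (x n - q n) (p - q n) + inner (x n - v) (q n - v) + inner (q n - v) (p - q n)"
      by (simp add: inner_diff_left inner_diff_right inner_commute algebra_simps)
    ultimately show "inner (x n - v) (p - v) \<le> e"
      by linarith
  qed
qed

lemma fejer_monotone_weak_conv:
  fixes F :: "'a::{real_inner,complete_space} set"
  assumes "F \<noteq> {}" "closed F" "convex F" "fejer_monotone F x"
    and "v \<in> F" "(\<lambda>n. metric_proj F (x n)) \<longlonglongrightarrow> v"
    and "\<And>s c. strict_mono s \<Longrightarrow> asymptotic_center (x \<circ> s) c \<Longrightarrow> c \<in> F"
  shows "weak_conv x v"
proof (rule weak_conv_if_asymptotic_centers)
  show "bounded (range x)"
    using fejer_monotone_bounded[OF assms(4,1)] .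
  fix s c
  assume s: "strict_mono s" and center: "asymptotic_center (x \<circ> s) c"
  have "bounded (range (x \<circ> s))"
    using \<open>bounded (range x)\<close> by (rule bounded_subset) auto
  moreover obtain D where "(\<lambda>n. (norm (x n - v))\<^sup>2) \<longlonglongrightarrow> D"
    using fejer_monotone_dist_convergent[OF assms(4,5)] .
  then have "(\<lambda>k. (norm ((x \<circ> s) k - v))\<^sup>2) \<longlonglongrightarrow> D"
    using LIMSEQ_subseq_LIMSEQ[OF _ s] by (simp add: o_def)
  moreover have "eventually (\<lambda>k. inner ((x \<circ> s) k - v) (c - v) \<le> e) sequentially" if "0 < e" for e
    using eventually_subseq[OF s metric_proj_limit_inner_le[OF assms(1-3) \<open>bounded (range x)\<close>
          assms(6) assms(7)[OF s center] that]]
    by simp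
  ultimately show "c = v"
    by (rule asymptotic_center_eqI[OF _ center])
qed

definition quasi_nonexpansive :: "'a::real_normed_vector set \<Rightarrow> ('a \<Rightarrow> 'a) \<Rightarrow> bool" where
  "quasi_nonexpansive E S \<longleftrightarrow>
     S ` E \<subseteq> E \<and> (\<forall>p\<in>fixset E S. \<forall>y\<in>E. norm (S y - p) \<le> norm (y - p))"

lemma gen_hybrid_quasi_nonexpansive:
  assumes "gen_hybrid E lam gam S"
  shows "quasi_nonexpansive E S"
  unfolding quasi_nonexpansive_def
proof (intro conjI ballI)
  show "S ` E \<subseteq> E"
    using assms by (simp add: gen_hybrid_def)
  fix p y
  assume "p \<in> fixset E S" "y \<in> E"
  then have "p \<in> E" "S p = p"
    by (simp_all add: fixset_def)
  have "\<forall>x\<in>E. \<forall>y\<in>E. lam * (norm (S x - S y))\<^sup>2 + (1 - lam) * (norm (x - S y))\<^sup>2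
      \<le> gam * (norm (S x - y))\<^sup>2 + (1 - gam) * (norm (x - y))\<^sup>2"
    using assms by (simp add: gen_hybrid_def)
  from this[rule_format, OF \<open>p \<in> E\<close> \<open>y \<in> E\<close>]
  have "(norm (p - S y))\<^sup>2 \<le> (norm (p - y))\<^sup>2"
    by (simp add: \<open>S p = p\<close> algebra_simps)
  then show "norm (S y - p) \<le> norm (y - p)"
    using power2_le_imp_le by (simp add: norm_minus_commute)
qed

lemma fixset_closed:
  assumes "quasi_nonexpansive E S" "closed E"
  shows "closed (fixset E S)"
  unfolding closed_sequential_limits
proof (intro allI impI)
  fix f l
  assume "(\<forall>n. f n \<in> fixset E S) \<and> f \<longlonglongrightarrow> l"
  then have f: "\<And>n. f n \<in> fixset E S" and lim: "f \<longlonglongrightarrow> l"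
    by auto
  have "f n \<in> E" for n
    using f[of n] by (simp add: fixset_def)
  from closed_sequentially[OF assms(2) this lim] have "l \<in> E" .
  have bound: "norm (f n - S l) \<le> norm (f n - l)" for n
  proof -
    have "norm (S l - f n) \<le> norm (l - f n)"
      using assms(1) f[of n] \<open>l \<in> E\<close> unfolding quasi_nonexpansive_def by blast
    then show ?thesis
      by (simp add: norm_minus_commute)
  qed
  have "(\<lambda>n. norm (f n - l)) \<longlonglongrightarrow> 0"
    using tendsto_norm_zero[OF LIM_zero[OF lim]] .
  then have "(\<lambda>n. f n - S l) \<longlonglongrightarrow> 0"
    by (rule Lim_null_comparison[OF always_eventually, rotated]) (use bound in blast)
  then have "f \<longlonglongrightarrow> S l"
    unfolding LIM_zero_iff .
  then have "S l = l"
    using lim by (rule LIMSEQ_unique)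
  with \<open>l \<in> E\<close> show "l \<in> fixset E S"
    by (simp add: fixset_def)
qed

lemma fixset_convex:
  fixes E :: "'a::real_inner set"
  assumes "quasi_nonexpansive E S" "convex E"
  shows "convex (fixset E S)"
  unfolding convex_alt
proof (intro ballI allI impI)
  fix a c and t :: real
  assume a: "a \<in> fixset E S" and c: "c \<in> fixset E S" and t: "0 \<le> t \<and> t \<le> 1"
  define y where "y = (1 - t) *\<^sub>R a + t *\<^sub>R c"
  have "y \<in> E"
    unfolding y_def using convexD_alt[OF assms(2)] a c t by (simp add: fixset_def)
  then have "norm (S y - a) \<le> norm (y - a)" "norm (S y - c) \<le> norm (y - c)"
    using assms(1) a c unfolding quasi_nonexpansive_def by blast+
  have split: "S y - y = (1 - t) *\<^sub>R (S y - a) + t *\<^sub>R (S y - c)"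
    by (simp add: y_def algebra_simps)
  have "(norm (S y - y))\<^sup>2
      = (1 - t) * (norm (S y - a))\<^sup>2 + t * (norm (S y - c))\<^sup>2 - t * (1 - t) * (norm (a - c))\<^sup>2"
    using norm_convex_combination_squared[of t "S y - a" "S y - c"] unfolding split
    by (simp add: norm_minus_commute)
  also have "\<dots> \<le> (1 - t) * (norm (y - a))\<^sup>2 + t * (norm (y - c))\<^sup>2 - t * (1 - t) * (norm (a - c))\<^sup>2"
    using \<open>norm (S y - a) \<le> norm (y - a)\<close> \<open>norm (S y - c) \<le> norm (y - c)\<close> t
    by (intro diff_right_mono add_mono mult_left_mono power_mono) auto
  also have "\<dots> = (norm ((1 - t) *\<^sub>R (y - a) + t *\<^sub>R (y - c)))\<^sup>2"
    using norm_convex_combination_squared[of t "y - a" "y - c"] by (simp add: norm_minus_commute)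
  also have "(1 - t) *\<^sub>R (y - a) + t *\<^sub>R (y - c) = 0"
    by (simp add: y_def algebra_simps)
  finally have "S y = y"
    by simp
  with \<open>y \<in> E\<close> show "(1 - t) *\<^sub>R a + t *\<^sub>R c \<in> fixset E S"
    by (simp add: fixset_def y_def)
qed

lemma gen_hybrid_asymptotic_center_in_fixset:
  fixes E :: "'a::{real_inner,complete_space} set"
  assumes "closed E" "convex E" "gen_hybrid E lam gam S"
    and "\<And>k. y k \<in> E" "bounded (range y)" "(\<lambda>k. S (y k) - y k) \<longlonglongrightarrow> 0"
    and "asymptotic_center y c"
  shows "c \<in> fixset E S"
proof -
  have "c \<in> E"
    using asymptotic_center_in[OF assms(1,2,4,5,7)] .
  define err where "err k = gam * ((norm (S (y k) - c))\<^sup>2 - (norm (y k - c))\<^sup>2)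
      - lam * ((norm (S (y k) - S c))\<^sup>2 - (norm (y k - S c))\<^sup>2)" for k
  have "\<forall>x\<in>E. \<forall>y\<in>E. lam * (norm (S x - S y))\<^sup>2 + (1 - lam) * (norm (x - S y))\<^sup>2
      \<le> gam * (norm (S x - y))\<^sup>2 + (1 - gam) * (norm (x - y))\<^sup>2"
    using assms(3) by (simp add: gen_hybrid_def)
  from this[rule_format, OF assms(4) \<open>c \<in> E\<close>]
  have "(norm (y k - S c))\<^sup>2 \<le> (norm (y k - c))\<^sup>2 + err k" for k
    by (simp add: err_def algebra_simps)
  moreover have "err \<longlonglongrightarrow> gam * 0 - lam * 0"
    unfolding err_def
    by (intro tendsto_diff tendsto_mult tendsto_const tendsto_norm_squared_diff_zero assms(5,6))
  ultimately have "S c = c"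
    using asymptotic_center_fixed[OF assms(5,7)] by simp
  with \<open>c \<in> E\<close> show ?thesis
    by (simp add: fixset_def)
qed

locale ishikawa_iteration =
  fixes E :: "'a::real_inner set" and S :: "'a \<Rightarrow> 'a"
    and a b :: "nat \<Rightarrow> real" and x :: "nat \<Rightarrow> 'a"
  assumes convex: "convex E"
    and quasi_nonexpansive: "quasi_nonexpansive E S"
    and iterates_in: "\<And>n. x n \<in> E"
    and a_bounds: "\<And>n. 0 \<le> a n \<and> a n \<le> 1"
    and b_bounds: "\<And>n. 0 \<le> b n \<and> b n \<le> 1"
    and iteration: "\<And>n. x (Suc n) = (1 - a n) *\<^sub>R x n + a n *\<^sub>R S ((1 - b n) *\<^sub>R x n + b n *\<^sub>R S (x n))"
begin

lemma norm_iterate_squared_le: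
  assumes "p \<in> fixset E S"
  shows "(norm (x (Suc n) - p))\<^sup>2
    \<le> (norm (x n - p))\<^sup>2 - a n * (b n * (1 - b n)) * (norm (x n - S (x n)))\<^sup>2"
proof -
  define y where "y = (1 - b n) *\<^sub>R x n + b n *\<^sub>R S (x n)"
  have S_in: "S z \<in> E" if "z \<in> E" for z
    using quasi_nonexpansive that unfolding quasi_nonexpansive_def by blast
  have closer: "(norm (S z - p))\<^sup>2 \<le> (norm (z - p))\<^sup>2" if "z \<in> E" for z
    using quasi_nonexpansive assms that unfolding quasi_nonexpansive_def by (simp add: power_mono)
  have shift: "(1 - t) *\<^sub>R u + t *\<^sub>R w - p = (1 - t) *\<^sub>R (u - p) + t *\<^sub>R (w - p)" for t u w
    by (simp add: algebra_simps)
  have "y \<in> E"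
    unfolding y_def using convexD_alt[OF convex iterates_in S_in[OF iterates_in]] b_bounds by blast
  have "(norm (y - p))\<^sup>2 = (1 - b n) * (norm (x n - p))\<^sup>2 + b n * (norm (S (x n) - p))\<^sup>2
      - b n * (1 - b n) * (norm (x n - S (x n)))\<^sup>2"
    unfolding y_def shift norm_convex_combination_squared by simp
  also have "\<dots> \<le> (norm (x n - p))\<^sup>2 - b n * (1 - b n) * (norm (x n - S (x n)))\<^sup>2"
    using mult_left_mono[OF closer[OF iterates_in] conjunct1[OF b_bounds]] by (simp add: algebra_simps)
  finally have y_closer: "(norm (y - p))\<^sup>2 \<le> (norm (x n - p))\<^sup>2 - b n * (1 - b n) * (norm (x n - S (x n)))\<^sup>2" .
  have "(norm (x (Suc n) - p))\<^sup>2 = (1 - a n) * (norm (x n - p))\<^sup>2 + a n * (norm (S y - p))\<^sup>2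
      - a n * (1 - a n) * (norm (x n - S y))\<^sup>2"
    unfolding iteration y_def[symmetric] shift norm_convex_combination_squared by simp
  also have "\<dots> \<le> (1 - a n) * (norm (x n - p))\<^sup>2 + a n * (norm (y - p))\<^sup>2"
  proof -
    have "0 \<le> a n * (1 - a n) * (norm (x n - S y))\<^sup>2"
      using a_bounds[of n] by simp
    then show ?thesis
      using a_bounds[of n] mult_left_mono[OF closer[OF \<open>y \<in> E\<close>], of "a n"] by linarith
  qed
  also have "\<dots> \<le> (1 - a n) * (norm (x n - p))\<^sup>2
      + a n * ((norm (x n - p))\<^sup>2 - b n * (1 - b n) * (norm (x n - S (x n)))\<^sup>2)"
    using mult_left_mono[OF y_closer, of "a n"] a_bounds[of n] by simp
  finally show ?thesis
    by (simp add: algebra_simps)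
qed

lemma fejer_monotone: "fejer_monotone (fixset E S) x"
  unfolding fejer_monotone_def
proof (intro ballI allI)
  fix p n
  assume "p \<in> fixset E S"
  have "0 \<le> a n * (b n * (1 - b n)) * (norm (x n - S (x n)))\<^sup>2"
    using a_bounds[of n] b_bounds[of n] by simp
  then have "(norm (x (Suc n) - p))\<^sup>2 \<le> (norm (x n - p))\<^sup>2"
    using norm_iterate_squared_le[OF \<open>p \<in> fixset E S\<close>, of n] by linarith
  then show "norm (x (Suc n) - p) \<le> norm (x n - p)"
    using power2_le_imp_le by simp
qed

lemma asymptotically_regular:
  assumes "fixset E S \<noteq> {}" "0 < \<alpha>" "\<And>n. \<alpha> \<le> a n"
    and "liminf (\<lambda>n. ereal (b n * (1 - b n))) > 0"
  shows "(\<lambda>n. S (x n) - x n) \<longlonglongrightarrow> 0"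
proof -
  obtain p where p: "p \<in> fixset E S"
    using assms(1) by blast
  obtain c where "0 < c" and c: "eventually (\<lambda>n. c < b n * (1 - b n)) sequentially"
    using eventually_gt_if_liminf_pos[OF assms(4)] .
  obtain D where "(\<lambda>n. (norm (x n - p))\<^sup>2) \<longlonglongrightarrow> D"
    using fejer_monotone_dist_convergent[OF fejer_monotone p] .
  then have conv: "convergent (\<lambda>n. (norm (x n - p))\<^sup>2)"
    by (rule convergentI)
  have decrease: "eventually (\<lambda>n. \<alpha> * c * (norm (S (x n) - x n))\<^sup>2
      \<le> (norm (x n - p))\<^sup>2 - (norm (x (Suc n) - p))\<^sup>2) sequentially"
    using c
  proof eventually_elim
    case (elim n)
    have "\<alpha> * c \<le> a n * (b n * (1 - b n))"
      using elim assms(2) assms(3)[of n] \<open>0 < c\<close> by (intro mult_mono) auto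
    then have "\<alpha> * c * (norm (S (x n) - x n))\<^sup>2 \<le> a n * (b n * (1 - b n)) * (norm (x n - S (x n)))\<^sup>2"
      by (simp add: mult_right_mono norm_minus_commute)
    then show ?case
      using norm_iterate_squared_le[OF p, of n] by linarith
  qed
  have "(\<lambda>n. (norm (S (x n) - x n))\<^sup>2) \<longlonglongrightarrow> 0"
    using \<open>0 < c\<close> assms(2) by (intro tendsto_zero_if_dominated_by_decrements[OF conv _ _ decrease]) simp_all
  then have "(\<lambda>n. norm (S (x n) - x n)) \<longlonglongrightarrow> 0"
    using tendsto_real_sqrt by fastforce
  then show ?thesis
    by (simp add: tendsto_norm_zero_iff)
qed

end

lemma ishikawa_iteration_weak_conv:
  fixes E :: "'a::{real_inner,complete_space} set"
  assumes "ishikawa_iteration E S a b x" "closed E" "gen_hybrid E lam gam S" "fixset E S \<noteq> {}"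
    and "0 < \<alpha>" "\<And>n. \<alpha> \<le> a n" "liminf (\<lambda>n. ereal (b n * (1 - b n))) > 0"
  shows "\<exists>v\<in>fixset E S. weak_conv x v \<and> (\<lambda>n. metric_proj (fixset E S) (x n)) \<longlonglongrightarrow> v"
proof -
  interpret ishikawa_iteration E S a b x
    by (fact assms(1))
  note F_props = assms(4) fixset_closed[OF quasi_nonexpansive assms(2)] fixset_convex[OF quasi_nonexpansive convex]
  obtain v where v: "v \<in> fixset E S" "(\<lambda>n. metric_proj (fixset E S) (x n)) \<longlonglongrightarrow> v"
    using fejer_monotone_metric_proj_convergent[OF F_props fejer_monotone] .
  have regular: "(\<lambda>n. S (x n) - x n) \<longlonglongrightarrow> 0"
    using asymptotically_regular[OF assms(4-7)] .
  have "weak_conv x v"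
  proof (rule fejer_monotone_weak_conv[OF F_props fejer_monotone v])
    fix s c
    assume s: "strict_mono s" and center: "asymptotic_center (x \<circ> s) c"
    have "bounded (range (x \<circ> s))"
      using fejer_monotone_bounded[OF fejer_monotone assms(4)] by (rule bounded_subset) auto
    moreover have "(\<lambda>k. S ((x \<circ> s) k) - (x \<circ> s) k) \<longlonglongrightarrow> 0"
      using LIMSEQ_subseq_LIMSEQ[OF regular s] by (simp add: o_def)
    ultimately show "c \<in> fixset E S"
      using gen_hybrid_asymptotic_center_in_fixset[OF assms(2) convex assms(3) _ _ _ center] iterates_in
      by simp
  qed
  with v show ?thesis
    by blast
qed

lemma variational_inequality_self:
  fixes x u :: "'a::real_inner"
  assumes "x \<in> E" "\<forall>y\<in>E. inner (y - u) (u - x) \<ge> 0"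
  shows "u = x"
proof -
  have "0 \<le> inner (x - u) (u - x)"
    using assms by blast
  also have "\<dots> = - (norm (x - u))\<^sup>2"
    by (simp add: power2_norm_eq_inner inner_commute inner_diff_left inner_diff_right)
  finally show ?thesis
    by simp
qed

theorem corollary3p2:
  fixes E :: "'a::{real_inner, complete_space} set"
    and S :: "'a \<Rightarrow> 'a" and lam gam :: real
    and \<alpha>s \<beta>s :: "nat \<Rightarrow> real" and \<alpha> b :: real
    and x u :: "nat \<Rightarrow> 'a" and x0 :: 'a
  assumes "E \<noteq> {}" and "closed E" and "convex E"
    and "gen_hybrid E lam gam S"
    and "fixset E S \<noteq> {}"
    and "0 < \<alpha>" and "\<And>n. \<alpha> \<le> \<alpha>s n \<and> \<alpha>s n \<le> 1"
    and "0 < b" and "b < 1" and "\<And>n. b \<le> \<beta>s n \<and> \<beta>s n \<le> 1"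
    and "liminf (\<lambda>n. ereal (\<beta>s n * (1 - \<beta>s n))) > 0"
    and "x0 \<in> E" and "x 0 = x0"
    and "\<And>n. u n \<in> E \<and> (\<forall>y\<in>E. inner (y - u n) (u n - x n) \<ge> 0)"
    and "\<And>n. x (Suc n) = (1 - \<alpha>s n) *\<^sub>R x n + \<alpha>s n *\<^sub>R
                 S ((1 - \<beta>s n) *\<^sub>R x n + \<beta>s n *\<^sub>R S (u n))"
  shows "\<exists>v\<in>fixset E S. weak_conv x v \<and>
           (\<lambda>n. metric_proj (fixset E S) (x n)) \<longlonglongrightarrow> v"
proof -
  have S_in: "S y \<in> E" if "y \<in> E" for y
    using assms(4) that by (auto simp: gen_hybrid_def)
  have \<beta>_bounds: "0 \<le> \<beta>s n \<and> \<beta>s n \<le> 1" and \<alpha>_bounds: "0 \<le> \<alpha>s n \<and> \<alpha>s n \<le> 1" for n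
    using assms(6,8) assms(7)[of n] assms(10)[of n] by auto
  have x_in: "x n \<in> E" for n
  proof (induction n)
    case 0
    show ?case
      using assms(12,13) by simp
  next
    case (Suc n)
    with S_in assms(14)[of n] \<beta>_bounds[of n] have "(1 - \<beta>s n) *\<^sub>R x n + \<beta>s n *\<^sub>R S (u n) \<in> E"
      by (intro convexD_alt[OF assms(3)]) auto
    with Suc S_in \<alpha>_bounds[of n] show ?case
      unfolding assms(15) by (intro convexD_alt[OF assms(3)]) auto
  qed
  have "u n = x n" for n
    using variational_inequality_self[OF x_in] assms(14) by blast
  then have "ishikawa_iteration E S \<alpha>s \<beta>s x"
    using assms(3,15) gen_hybrid_quasi_nonexpansive[OF assms(4)] x_in \<alpha>_bounds \<beta>_bounds
    by unfold_locales simp_all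
  from ishikawa_iteration_weak_conv[OF this assms(2,4,5,6) _ assms(11)] assms(7)
  show ?thesis
    by blast
qed

end
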